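(* Let $d\ge 3$. If $w$ is a nonempty word over the alphabet $A=\{a_1,\dots,a_d\}$ (positive letters only, no inverses), then $w$ does not represent the identity element of $G_d$.
   Context: Let $d\ge 3$, $X=\{1,\dots,d\}$, $T$ the $d$-regular rooted tree with vertex set $X^*$. $\mathrm{Aut}(T)$ is the group of root-preserving automorphisms with product left-to-right: $(gh)(u)=h(g(u))$. Sections $g|_u$ are defined by $g(uv)=g(u)\,g|_u(v)$; we write $g=(g|_1,\dots,g|_d)\lambda_g$ with $\lambda_g\in S_d$ the action on the first level; $e$ is the identity; $\overline{j}\in\{1,\dots,d\}$ denotes $j$ mod $d$. $G_d=\langle a_1,\dots,a_d\rangle\le\mathrm{Aut}(T)$ where $a_i$ acts on the first level as $(i\ \overline{i+1})$, with $a_i|_i=a_i$, $a_i|_{\overline{i+1}}=a_{\overline{i+1}}$, and $a_i|_x=e$ otherwise. *)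

theory Defs
  imports Main
begin

text \<open>Letters of X are 1..d; vertices of the tree T are lists over {1..d}.
  nxt d i is the residue of i+1 modulo d, taken in {1..d}.\<close>
definition nxt :: "nat \<Rightarrow> nat \<Rightarrow> nat" where
  "nxt d i = (if i = d then 1 else i + 1)"

text \<open>Action of the generator a_i on a vertex:
  a_i(x v) = a_i(x) a_i|_x(v), with a_i acting on the first level as the
  transposition (i, nxt d i), a_i|_i = a_i, a_i|_(nxt d i) = a_(nxt d i),
  and trivial sections elsewhere.\<close>
fun gen_act :: "nat \<Rightarrow> nat \<Rightarrow> nat list \<Rightarrow> nat list" where
  "gen_act d i [] = []"
| "gen_act d i (x # v) =
     (if x = i then nxt d i # gen_act d i v
      else if x = nxt d i then i # gen_act d (nxt d i) v
      else x # v)"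

text \<open>Action of the group element represented by a positive word
  a_{i1} ... a_{ik} (list [i1,...,ik]); products are left-to-right, so
  a_{i1} acts first.\<close>
definition word_act :: "nat \<Rightarrow> nat list \<Rightarrow> nat list \<Rightarrow> nat list" where
  "word_act d w u = fold (gen_act d) w u"

definition represents_identity :: "nat \<Rightarrow> nat list \<Rightarrow> bool" where
  "represents_identity d w \<longleftrightarrow> (\<forall>u \<in> lists {1..d}. word_act d w u = u)"

end

theory Submission
  imports Defs
begin

text \<open>Sections of a positive word are positive words of no greater length: a letter a_i
  contributes one letter to the section at x only if it moves x, and otherwise drops out.
  So a minimal counterexample w would have to move both j and nxt d j with every letter
  (j the first letter of w); as nxt d (nxt d j) \<noteq> j for d \<ge> 3, this forces
  w = a_j^n. But the section of a_j^n (n \<ge> 2) at j starts with a_j a_(nxt d j), is not a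
  power of one letter and equally long, and its shorter sections are handled by minimality.\<close>

fun section_word :: "nat \<Rightarrow> nat list \<Rightarrow> nat \<Rightarrow> nat list" where
  "section_word d [] x = []"
| "section_word d (i # w) x =
     (if x = i then i # section_word d w (nxt d i)
      else if x = nxt d i then nxt d i # section_word d w i
      else section_word d w x)"

lemma word_act_Cons: "word_act d (i # w) v = word_act d w (gen_act d i v)"
  by (simp add: word_act_def)

lemma word_act_Cons_vertex:
  "\<exists>y. word_act d w (x # u) = y # word_act d (section_word d w x) u"
proof (induction w arbitrary: x u)
  case Nil
  then show ?case by (simp add: word_act_def)
next
  case (Cons i w)
  then show ?case by (auto simp: word_act_Cons)
qed

lemma represents_identity_section:
  assumes "represents_identity d w" and "x \<in> {1..d}"
  shows "represents_identity d (section_word d w x)"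
  unfolding represents_identity_def
proof
  fix u assume "u \<in> lists {1..d}"
  with assms have "word_act d w (x # u) = x # u" by (simp add: represents_identity_def)
  then show "word_act d (section_word d w x) u = u"
    using word_act_Cons_vertex[of d w x u] by auto
qed

lemma length_section_word_le: "length (section_word d w x) \<le> length w"
  by (induction w arbitrary: x) (auto simp: le_SucI)

lemma nxt_in_range: "i \<in> {1..d} \<Longrightarrow> nxt d i \<in> {1..d}"
  by (auto simp: nxt_def)

lemma set_section_word: "set w \<subseteq> {1..d} \<Longrightarrow> set (section_word d w x) \<subseteq> {1..d}"
  by (induction w arbitrary: x) (auto simp: nxt_def)

lemma nxt_ne_self: "d \<ge> 3 \<Longrightarrow> i \<in> {1..d} \<Longrightarrow> nxt d i \<noteq> i"
  unfolding nxt_def by simp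

lemma nxt_nxt_ne_self: "d \<ge> 3 \<Longrightarrow> i \<in> {1..d} \<Longrightarrow> nxt d (nxt d i) \<noteq> i"
  unfolding nxt_def by (cases "i = d"; cases "i + 1 = d") simp_all

lemma nxt_inj: "i \<in> {1..d} \<Longrightarrow> j \<in> {1..d} \<Longrightarrow> nxt d i = nxt d j \<Longrightarrow> i = j"
  unfolding nxt_def by (cases "i = d"; cases "j = d") simp_all

lemma full_length_section_moved:
  assumes "length (section_word d (i # w) x) = length (i # w)"
  shows "x = i \<or> x = nxt d i"
  using assms length_section_word_le[of d w x] by (auto split: if_splits)

text \<open>The pair \<open>{p, q}\<close> is swapped by every letter, so it stays equal to \<open>{j, nxt d j}\<close>.\<close>

lemma full_length_sections_power:
  assumes d: "d \<ge> 3" and j: "j \<in> {1..d}"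
    and "set w \<subseteq> {1..d}" and "p = j \<and> q = nxt d j \<or> p = nxt d j \<and> q = j"
    and "length (section_word d w p) = length w" and "length (section_word d w q) = length w"
  shows "set w \<subseteq> {j}"
  using assms(3-)
proof (induction w arbitrary: p q)
  case Nil
  then show ?case by simp
next
  case (Cons i w)
  have i: "i \<in> {1..d}" using Cons.prems(1) by auto
  have p: "p = i \<or> p = nxt d i" and q: "q = i \<or> q = nxt d i"
    using Cons.prems(3,4) full_length_section_moved by blast+
  have "p \<noteq> q" using Cons.prems(2) nxt_ne_self[OF d j] by auto
  have ij: "i = j"
  proof (rule ccontr)
    assume "i \<noteq> j"
    then have "j = nxt d i" and "nxt d j = i"
      using p q Cons.prems(2) \<open>p \<noteq> q\<close> nxt_inj[OF i j] by auto
    then show False using nxt_nxt_ne_self[OF d i] by simp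
  qed
  define p' where "p' = (if p = i then nxt d i else i)"
  define q' where "q' = (if q = i then nxt d i else i)"
  have "length (section_word d w p') = length w" "length (section_word d w q') = length w"
    using Cons.prems(3,4) p q nxt_ne_self[OF d i] by (auto simp: p'_def q'_def)
  moreover have "p' = j \<and> q' = nxt d j \<or> p' = nxt d j \<and> q' = j"
    using Cons.prems(2) ij nxt_ne_self[OF d j] by (auto simp: p'_def q'_def)
  ultimately show ?case using Cons.IH Cons.prems(1) ij by auto
qed

lemma nonconstant_word_not_identity:
  assumes d: "d \<ge> 3"
    and shorter: "\<And>v. length v < length w \<Longrightarrow> v \<noteq> [] \<Longrightarrow> set v \<subseteq> {1..d} \<Longrightarrow>
                   \<not> represents_identity d v"
    and w: "w = j # r" "set w \<subseteq> {1..d}" "\<not> set r \<subseteq> {j}"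
  shows "\<not> represents_identity d w"
proof -
  have j: "j \<in> {1..d}" and nj: "nxt d j \<in> {1..d}" using w(1,2) nxt_in_range by auto
  have ne: "section_word d w x \<noteq> []" if "x = j \<or> x = nxt d j" for x
    using that w(1) by auto
  have short: "\<not> represents_identity d w"
    if "x = j \<or> x = nxt d j" "x \<in> {1..d}" "length (section_word d w x) < length w" for x
    using shorter[OF that(3) ne[OF that(1)] set_section_word[OF w(2)]] that(2)
      represents_identity_section by blast
  show ?thesis
  proof (cases "length (section_word d w j) < length w \<or>
                length (section_word d w (nxt d j)) < length w")
    case True
    then show ?thesis using short j nj by blast
  next
    case False
    then have "set w \<subseteq> {j}"
      using full_length_sections_power[OF d j w(2), of j "nxt d j"]
        length_section_word_le[of d w] le_neq_implies_less by metis
    then show ?thesis using w(1,3) by auto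
  qed
qed

lemma constant_word_not_identity:
  assumes d: "d \<ge> 3"
    and shorter: "\<And>v. length v < length w \<Longrightarrow> v \<noteq> [] \<Longrightarrow> set v \<subseteq> {1..d} \<Longrightarrow>
                   \<not> represents_identity d v"
    and w: "w = j # r" "j \<in> {1..d}" "set r \<subseteq> {j}"
  shows "\<not> represents_identity d w"
proof (cases r)
  case Nil
  have "word_act d w [j] \<noteq> [j]" using w(1) Nil nxt_ne_self[OF d w(2)]
    by (simp add: word_act_def)
  then show ?thesis using w(2) by (auto simp: represents_identity_def)
next
  case (Cons k r')
  have s: "section_word d w j = j # nxt d j # section_word d r' j"
    using w Cons nxt_ne_self[OF d w(2)] by simp
  have "\<not> represents_identity d (section_word d w j)"
  proof (rule nonconstant_word_not_identity[OF d _ s])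
    have "set w \<subseteq> {1..d}" using w by auto
    then show "set (section_word d w j) \<subseteq> {1..d}" by (rule set_section_word)
    show "\<not> set (nxt d j # section_word d r' j) \<subseteq> {j}"
      using nxt_ne_self[OF d w(2)] by simp
    show "\<not> represents_identity d v"
      if "length v < length (section_word d w j)" "v \<noteq> []" "set v \<subseteq> {1..d}" for v
      using shorter[OF _ that(2,3)] that(1) length_section_word_le[of d w j] by simp
  qed
  then show ?thesis using w(2) represents_identity_section by blast
qed

theorem theorem3p8:
  fixes d :: nat and w :: "nat list"
  assumes "d \<ge> 3" and "w \<noteq> []" and "set w \<subseteq> {1..d}"
  shows "\<not> represents_identity d w"
  using assms(2,3)
proof (induction "length w" arbitrary: w rule: less_induct)
  case less
  then obtain j r where w: "w = j # r" by (cases w) auto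
  then have j: "j \<in> {1..d}" using less.prems(2) by auto
  have shorter: "\<not> represents_identity d v"
    if "length v < length w" "v \<noteq> []" "set v \<subseteq> {1..d}" for v
    using less.hyps that by blast
  show ?case
  proof (cases "set r \<subseteq> {j}")
    case True
    show ?thesis using constant_word_not_identity[OF assms(1) shorter w j True] .
  next
    case False
    show ?thesis using nonconstant_word_not_identity[OF assms(1) shorter w less.prems(2) False] .
  qed
qed

end
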